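(* Let $\Phi_t=(I-t\Psi)^{-1}$ be an inverse-linear path with $h_0$-self-adjoint $\Psi$, fix $X,Y\in\mathfrak g$, and set $A=[\Psi X,Y]+[X,\Psi Y]$, $B=[\Psi X,\Psi Y]$, $C=[\Psi X,Y]+[\Psi Y,X]$, $D=\Psi^2[X,Y]-\Psi A+B$. Then for every $t$ in the domain of $\kappa=\kappa^\Psi$, $$\kappa(t)=\alpha+\beta t+\gamma t^2+\delta t^3-\tfrac34 t^4\,|D|_{h_t}^2,$$ where $|D|_{h_t}^2=\langle\Phi_tD,D\rangle$ and $\alpha=\tfrac14|[X,Y]|^2$, $\beta=-\tfrac34\langle\Psi[X,Y],[X,Y]\rangle$, $\gamma=-\tfrac34|\Psi[X,Y]|^2+\tfrac32\langle\Psi[X,Y],A\rangle-\tfrac12\langle[X,Y],B\rangle-\tfrac14|A|^2+\tfrac14|C|^2-\langle[\Psi X,X],[\Psi Y,Y]\rangle$, $\delta=-\tfrac34\langle\Psi^3[X,Y],[X,Y]\rangle+\tfrac32\langle\Psi^2[X,Y],A\rangle-\tfrac32\langle\Psi[X,Y],B\rangle-\tfrac34\langle\Psi A,A\rangle-\tfrac14\langle\Psi C,C\rangle+\langle\Psi[\Psi X,X],[\Psi Y,Y]\rangle+\langle A,B\rangle$.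
   Context: $G$ is a compact Lie group with Lie algebra $\mathfrak g$ and bi-invariant metric $h_0$; $\langle Z_1,Z_2\rangle=h_0(Z_1,Z_2)$, $|Z|^2=\langle Z,Z\rangle$. A left-invariant metric $h$ corresponds to the $h_0$-self-adjoint positive definite $\Phi$ with $h(X,Y)=\langle\Phi X,Y\rangle$ on $\mathfrak g$. An inverse-linear path is $\Phi_t=(I-t\Psi)^{-1}$ with $\Psi$ $h_0$-self-adjoint; $h_t$ is the left-invariant metric with matrix $\Phi_t$, defined on the open interval of $t$ (containing $0$) where $I-t\Psi$ is positive definite; this interval is the domain of $\kappa$. The unnormalized sectional curvature is $k_h(Z_1,Z_2)=h(R_h(Z_1,Z_2)Z_2,Z_1)$, and $\kappa(t)=\kappa^\Psi(t)=k_{h_t}(\Phi_t^{-1}X,\Phi_t^{-1}Y)$. *)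

theory Defs
  imports "HOL-Analysis.Analysis"
begin

text \<open>The Lie algebra g of a compact Lie group G with bi-invariant metric h0 is modelled
as a finite-dimensional real inner product space (type class euclidean_space, whose inner
product plays the role of h0) together with a Lie bracket br for which h0 is ad-invariant.\<close>

definition compact_lie_algebra :: "('a::euclidean_space \<Rightarrow> 'a \<Rightarrow> 'a) \<Rightarrow> bool" where
  "compact_lie_algebra br \<longleftrightarrow>
     bilinear br \<and>
     (\<forall>X Y. br X Y = - br Y X) \<and>
     (\<forall>X Y Z. br X (br Y Z) + br Y (br Z X) + br Z (br X Y) = 0) \<and>
     (\<forall>X Y Z. inner (br X Y) Z = inner X (br Y Z))"

definition self_adjoint :: "('a::euclidean_space \<Rightarrow> 'a) \<Rightarrow> bool" where
  "self_adjoint P \<longleftrightarrow> linear P \<and> (\<forall>u v. inner (P u) v = inner u (P v))"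

text \<open>Left-invariant metric with matrix Phi: h(X,Y) = <Phi X, Y>.\<close>
definition metric :: "('a::euclidean_space \<Rightarrow> 'a) \<Rightarrow> 'a \<Rightarrow> 'a \<Rightarrow> real" where
  "metric Phi X Y = inner (Phi X) Y"

text \<open>Levi-Civita connection on left-invariant vector fields (Koszul formula).\<close>
definition lc_conn :: "('a::euclidean_space \<Rightarrow> 'a \<Rightarrow> 'a) \<Rightarrow> ('a \<Rightarrow> 'a) \<Rightarrow> 'a \<Rightarrow> 'a \<Rightarrow> 'a" where
  "lc_conn br Phi X Y = (THE U. \<forall>Z. metric Phi U Z =
      (metric Phi (br X Y) Z - metric Phi (br Y Z) X + metric Phi (br Z X) Y) / 2)"

definition curv :: "('a::euclidean_space \<Rightarrow> 'a \<Rightarrow> 'a) \<Rightarrow> ('a \<Rightarrow> 'a) \<Rightarrow> 'a \<Rightarrow> 'a \<Rightarrow> 'a \<Rightarrow> 'a" where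
  "curv br Phi X Y Z = lc_conn br Phi X (lc_conn br Phi Y Z) - lc_conn br Phi Y (lc_conn br Phi X Z)
      - lc_conn br Phi (br X Y) Z"

definition sec_curv :: "('a::euclidean_space \<Rightarrow> 'a \<Rightarrow> 'a) \<Rightarrow> ('a \<Rightarrow> 'a) \<Rightarrow> 'a \<Rightarrow> 'a \<Rightarrow> real" where
  "sec_curv br Phi Z1 Z2 = metric Phi (curv br Phi Z1 Z2 Z2) Z1"

definition inv_lin_path :: "('a::euclidean_space \<Rightarrow> 'a) \<Rightarrow> real \<Rightarrow> 'a \<Rightarrow> 'a" where
  "inv_lin_path Psi t = inv (\<lambda>v. v - t *\<^sub>R Psi v)"

definition kappa_dom :: "('a::euclidean_space \<Rightarrow> 'a) \<Rightarrow> real set" where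
  "kappa_dom Psi = {t. \<forall>v. v \<noteq> 0 \<longrightarrow> inner (v - t *\<^sub>R Psi v) v > 0}"

definition kappa :: "('a::euclidean_space \<Rightarrow> 'a \<Rightarrow> 'a) \<Rightarrow> ('a \<Rightarrow> 'a) \<Rightarrow> 'a \<Rightarrow> 'a \<Rightarrow> real \<Rightarrow> real" where
  "kappa br Psi X Y t = sec_curv br (inv_lin_path Psi t)
      (inv (inv_lin_path Psi t) X) (inv (inv_lin_path Psi t) Y)"

end

theory Submission
  imports Defs
begin

text \<open>Write \<open>M = I - t \<Psi>\<close>, so that \<open>h\<^sub>t\<close> has matrix \<open>\<Phi>\<^sub>t = M\<^sup>-\<^sup>1\<close> and
  \<open>\<kappa>(t) = k\<^bsub>h\<^sub>t\<^esub>(MX, MY)\<close>. By the Koszul formula the Levi-Civita connection of a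
  left-invariant metric with matrix \<open>\<Phi>\<close> is \<open>\<nabla>\<^sub>a b = \<Phi>\<^sup>-\<^sup>1 K(a,b)\<close> with
  \<open>K(a,b) = (\<Phi>[a,b] - [\<Phi>a,b] + [a,\<Phi>b]) / 2\<close>, and ad-invariance of \<open>h\<^sub>0\<close> reduces
  \<open>k(MX, MY)\<close> to four inner products of brackets of \<open>X, Y, MX, MY\<close>. Since \<open>M\<close> is affine
  in \<open>t\<close>, all of them are polynomials in \<open>t\<close> except \<open>\<langle>\<Phi>\<^sub>t N, N\<rangle>\<close> with
  \<open>N = [MX, MY]\<close>; splitting \<open>N = M E + t\<^sup>2 D\<close> with \<open>D\<close> independent of \<open>t\<close> confines the
  non-polynomial dependence to \<open>t\<^sup>4 \<langle>\<Phi>\<^sub>t D, D\<rangle>\<close>.\<close>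

lemma
  assumes "compact_lie_algebra br"
  shows compact_lie_algebra_bilinear: "bilinear br"
    and compact_lie_algebra_antisym: "br X Y = - br Y X"
    and compact_lie_algebra_ad_invariant: "inner (br X Y) Z = inner X (br Y Z)"
  using assms unfolding compact_lie_algebra_def by blast+

lemma compact_lie_algebra_bracket_self:
  assumes "compact_lie_algebra br"
  shows "br X X = 0"
  using compact_lie_algebra_antisym[OF assms, of X X]
  by (metis eq_neg_iff_add_eq_0 scaleR_2 scaleR_eq_0_iff zero_neq_numeral)

lemma compact_lie_algebra_inner_cycle:
  assumes "compact_lie_algebra br"
  shows "inner (br X Y) Z = inner Y (br Z X)"
proof -
  have "inner (br X Y) Z = - inner (br Y X) Z"
    by (subst compact_lie_algebra_antisym[OF assms]) simp
  also have "\<dots> = - inner Y (br X Z)"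
    by (simp add: compact_lie_algebra_ad_invariant[OF assms])
  also have "\<dots> = inner Y (br Z X)"
    by (subst (2) compact_lie_algebra_antisym[OF assms]) simp
  finally show ?thesis .
qed

lemma
  assumes "self_adjoint P"
  shows self_adjoint_linear: "linear P"
    and self_adjoint_inner: "inner (P u) v = inner u (P v)"
  using assms unfolding self_adjoint_def by auto

lemma self_adjoint_inv:
  assumes "self_adjoint M" "bij M"
  shows "self_adjoint (inv M)"
  unfolding self_adjoint_def
proof safe
  show "linear (inv M)"
    using assms by (simp add: bij_is_inj inj_linear_imp_inv_linear self_adjoint_linear)
  have M_inv: "M (inv M v) = v" for v
    using assms(2) by (simp add: bij_is_surj surj_f_inv_f)
  show "inner (inv M u) v = inner u (inv M v)" for u v
    by (metis M_inv self_adjoint_inner[OF assms(1)])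
qed

lemma linear_id_minus_scaled:
  assumes "linear Psi"
  shows "linear (\<lambda>v. v - t *\<^sub>R Psi v)"
  by (rule linearI) (simp_all add: linear_add[OF assms] linear_cmul[OF assms] algebra_simps)

lemma self_adjoint_id_minus_scaled:
  assumes "self_adjoint Psi"
  shows "self_adjoint (\<lambda>v. v - t *\<^sub>R Psi v)"
  using assms linear_id_minus_scaled[OF self_adjoint_linear[OF assms]]
  unfolding self_adjoint_def by (simp add: inner_diff_left inner_diff_right)

lemma bij_id_minus_scaled:
  assumes "linear Psi" and "t \<in> kappa_dom Psi"
  shows "bij (\<lambda>v. v - t *\<^sub>R Psi v)"
proof -
  let ?M = "\<lambda>v. v - t *\<^sub>R Psi v"
  have lin: "linear ?M"
    using assms(1) by (rule linear_id_minus_scaled)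
  have "inj ?M"
    unfolding linear_inj_iff_eq_0[OF lin]
    using assms(2) unfolding kappa_dom_def by force
  then show ?thesis
    using lin linear_injective_imp_surjective by (auto simp: bij_def)
qed

definition koszul :: "('a::euclidean_space \<Rightarrow> 'a \<Rightarrow> 'a) \<Rightarrow> ('a \<Rightarrow> 'a) \<Rightarrow> 'a \<Rightarrow> 'a \<Rightarrow> 'a" where
  "koszul br Phi a b = (1/2) *\<^sub>R (Phi (br a b) - br (Phi a) b + br a (Phi b))"

lemma inner_koszul:
  assumes "compact_lie_algebra br" and "self_adjoint Phi"
  shows "inner (koszul br Phi a b) c
    = (inner (br a b) (Phi c) - inner (br b c) (Phi a) + inner (br c a) (Phi b)) / 2"
proof -
  have "inner (Phi (br a b)) c = inner (br a b) (Phi c)"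
    by (rule self_adjoint_inner[OF assms(2)])
  moreover have "inner (br (Phi a) b) c = inner (br b c) (Phi a)"
    by (metis compact_lie_algebra_ad_invariant[OF assms(1)] inner_commute)
  moreover have "inner (br a (Phi b)) c = inner (br c a) (Phi b)"
    by (metis compact_lie_algebra_inner_cycle[OF assms(1)] inner_commute)
  ultimately show ?thesis
    by (simp add: koszul_def inner_diff_left inner_add_left)
qed

lemma lc_conn_eq_koszul:
  assumes "compact_lie_algebra br" and "self_adjoint Phi" and "bij Phi"
  shows "lc_conn br Phi a b = inv Phi (koszul br Phi a b)"
proof -
  let ?K = "koszul br Phi a b"
  have K: "inner ?K Z
      = (metric Phi (br a b) Z - metric Phi (br b Z) a + metric Phi (br Z a) b) / 2" for Z
    by (simp add: inner_koszul[OF assms(1,2)] metric_def self_adjoint_inner[OF assms(2)]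
        inner_commute[of "Phi _"])
  have Phi_inv: "Phi (inv Phi v) = v" for v
    using assms(3) by (simp add: bij_is_surj surj_f_inv_f)
  show ?thesis
    unfolding lc_conn_def
  proof (rule the_equality)
    show "\<forall>Z. metric Phi (inv Phi ?K) Z
        = (metric Phi (br a b) Z - metric Phi (br b Z) a + metric Phi (br Z a) b) / 2"
      using K by (simp add: metric_def Phi_inv)
  next
    fix U
    assume U: "\<forall>Z. metric Phi U Z
        = (metric Phi (br a b) Z - metric Phi (br b Z) a + metric Phi (br Z a) b) / 2"
    have "inner (Phi U - ?K) Z = 0" for Z
      using K[of Z] U[rule_format, of Z] by (simp add: metric_def inner_diff_left)
    then have "Phi U = ?K"
      by (metis inner_eq_zero_iff right_minus_eq)
    then show "U = inv Phi ?K"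
      using assms(3) by (metis bij_is_inj inv_f_f)
  qed
qed

lemma sec_curv_koszul:
  assumes "compact_lie_algebra br" and "self_adjoint Phi" and "bij Phi"
  shows "sec_curv br Phi Z1 Z2
    = inner (koszul br Phi Z1 (inv Phi (koszul br Phi Z2 Z2))) Z1
      - inner (koszul br Phi Z2 (inv Phi (koszul br Phi Z1 Z2))) Z1
      - inner (koszul br Phi (br Z1 Z2) Z2) Z1"
proof -
  have Phi_inv: "Phi (inv Phi v) = v" for v
    using assms(3) by (simp add: bij_is_surj surj_f_inv_f)
  show ?thesis
    unfolding sec_curv_def curv_def metric_def lc_conn_eq_koszul[OF assms]
    by (simp add: linear_diff[OF self_adjoint_linear[OF assms(2)]] Phi_inv inner_diff_left)
qed

lemma koszul_inverse_metric_self_term: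
  assumes cla: "compact_lie_algebra br" and "self_adjoint M" and "bij M"
  shows "inner (koszul br (inv M) (M X) (M (koszul br (inv M) (M Y) (M Y)))) (M X)
    = inner (M (br (M Y) Y)) (br X (M X))"
proof -
  have sa: "self_adjoint (inv M)"
    using assms(2,3) by (rule self_adjoint_inv)
  have "koszul br (inv M) (M Y) (M Y) = br (M Y) Y"
    using assms(3) compact_lie_algebra_antisym[OF cla, of Y "M Y"]
    by (simp add: koszul_def bij_is_inj compact_lie_algebra_bracket_self[OF cla]
        linear_0[OF self_adjoint_linear[OF sa]] scaleR_2[symmetric])
  moreover have "inner (koszul br (inv M) (M X) W) (M X) = inner W (br X (M X))" for W
    using assms(3) compact_lie_algebra_antisym[OF cla, of W "M X"]
    by (simp add: inner_koszul[OF cla sa] bij_is_inj compact_lie_algebra_bracket_self[OF cla]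
        compact_lie_algebra_inner_cycle[OF cla])
  ultimately show ?thesis
    by simp
qed

lemma koszul_inverse_metric_mixed_term:
  fixes br :: "'a::euclidean_space \<Rightarrow> 'a \<Rightarrow> 'a" and M :: "'a \<Rightarrow> 'a" and X Y :: 'a
  assumes cla: "compact_lie_algebra br" and "self_adjoint M" and "bij M"
  defines "N \<equiv> br (M X) (M Y)" and "Q \<equiv> br X (M Y) - br (M X) Y"
  shows "inner (koszul br (inv M) (M Y) (M (koszul br (inv M) (M X) (M Y)))) (M X)
    = (inner (inv M N) N - inner (M Q) Q) / 4"
proof -
  let ?K = "koszul br (inv M)"
  have sa: "self_adjoint (inv M)"
    using assms(2,3) by (rule self_adjoint_inv)
  have Phi_M: "inv M (M v) = v" and M_Phi: "M (inv M v) = v" for v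
    using assms(3) by (simp_all add: bij_is_inj bij_is_surj surj_f_inv_f)
  have K12: "?K (M X) (M Y) = (1/2) *\<^sub>R (inv M N - Q)"
    by (simp add: koszul_def Phi_M N_def Q_def algebra_simps)
  have KV: "inner (?K (M Y) V) (M X) = (inner V Q + inner N (inv M V)) / 2" for V
    unfolding inner_koszul[OF cla sa] Phi_M compact_lie_algebra_inner_cycle[OF cla, of "M Y" V]
      compact_lie_algebra_ad_invariant[OF cla, of V "M X"]
    by (simp add: N_def Q_def inner_diff_right)
  have "inner (?K (M Y) (M (?K (M X) (M Y)))) (M X)
      = (inner (M (?K (M X) (M Y))) Q + inner N (?K (M X) (M Y))) / 2"
    by (simp add: KV Phi_M)
  also have "\<dots> = (inner (N - M Q) Q + inner N (inv M N - Q)) / 4"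
    unfolding K12 using self_adjoint_linear[OF assms(2)]
    by (simp add: linear_cmul linear_diff M_Phi inner_diff_left inner_diff_right)
  also have "\<dots> = (inner (inv M N) N - inner (M Q) Q) / 4"
    by (simp add: inner_diff_left inner_diff_right inner_commute)
  finally show ?thesis .
qed

lemma koszul_inverse_metric_bracket_term:
  fixes br :: "'a::euclidean_space \<Rightarrow> 'a \<Rightarrow> 'a" and M :: "'a \<Rightarrow> 'a" and X Y :: 'a
  assumes cla: "compact_lie_algebra br" and "self_adjoint M" and "bij M"
  defines "N \<equiv> br (M X) (M Y)" and "S \<equiv> br X (M Y) + br (M X) Y"
  shows "inner (koszul br (inv M) N (M Y)) (M X) = (inner (inv M N) N - inner N S) / 2"
proof -
  have sa: "self_adjoint (inv M)"
    using assms(2,3) by (rule self_adjoint_inv)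
  have Phi_M: "inv M (M v) = v" for v
    using assms(3) by (simp add: bij_is_inj)
  have "inner (koszul br (inv M) N (M Y)) (M X)
      = (inner N (br (M Y) X) + inner N (inv M N) + inner N (br Y (M X))) / 2"
    unfolding inner_koszul[OF cla sa] Phi_M compact_lie_algebra_ad_invariant[OF cla, of N "M Y"]
      compact_lie_algebra_inner_cycle[OF cla, of "M X" N]
      compact_lie_algebra_antisym[OF cla, of "M Y" "M X"]
    by (simp add: N_def)
  also have "\<dots> = (inner (inv M N) N - inner N S) / 2"
    using compact_lie_algebra_antisym[OF cla, of "M Y" X]
      compact_lie_algebra_antisym[OF cla, of Y "M X"]
    by (simp add: S_def inner_add_right inner_commute)
  finally show ?thesis .
qed

lemma sec_curv_inverse_metric:
  assumes cla: "compact_lie_algebra br" and "self_adjoint M" and "bij M"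
  shows "sec_curv br (inv M) (M X) (M Y)
    = inner (M (br (M Y) Y)) (br X (M X))
      + 1/4 * inner (M (br X (M Y) - br (M X) Y)) (br X (M Y) - br (M X) Y)
      + 1/2 * inner (br (M X) (M Y)) (br X (M Y) + br (M X) Y)
      - 3/4 * inner (inv M (br (M X) (M Y))) (br (M X) (M Y))"
proof -
  have sa: "self_adjoint (inv M)" and bij: "bij (inv M)" and inv_inv: "inv (inv M) = M"
    using assms(2,3) by (simp_all add: self_adjoint_inv bij_imp_bij_inv inv_inv_eq)
  show ?thesis
    unfolding sec_curv_koszul[OF cla sa bij] inv_inv koszul_inverse_metric_self_term[OF assms]
      koszul_inverse_metric_mixed_term[OF assms] koszul_inverse_metric_bracket_term[OF assms]
    by (simp add: inner_add_right inner_diff_right field_simps)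
qed

lemma kappa_eq_sec_curv:
  assumes "linear Psi" and "t \<in> kappa_dom Psi"
  shows "kappa br Psi X Y t
    = sec_curv br (inv (\<lambda>v. v - t *\<^sub>R Psi v)) (X - t *\<^sub>R Psi X) (Y - t *\<^sub>R Psi Y)"
  unfolding kappa_def inv_lin_path_def inv_inv_eq[OF bij_id_minus_scaled[OF assms]] ..

lemma bracket_id_minus_scaled:
  assumes cla: "compact_lie_algebra br"
  shows "br (X - t *\<^sub>R Psi X) (Y - t *\<^sub>R Psi Y)
      = br X Y - t *\<^sub>R (br (Psi X) Y + br X (Psi Y)) + t\<^sup>2 *\<^sub>R br (Psi X) (Psi Y)"
    and "br X (Y - t *\<^sub>R Psi Y) - br (X - t *\<^sub>R Psi X) Y = t *\<^sub>R (br (Psi X) Y + br (Psi Y) X)"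
    and "br X (Y - t *\<^sub>R Psi Y) + br (X - t *\<^sub>R Psi X) Y
      = 2 *\<^sub>R br X Y - t *\<^sub>R (br (Psi X) Y + br X (Psi Y))"
    and "br (Y - t *\<^sub>R Psi Y) Y = - t *\<^sub>R br (Psi Y) Y"
    and "br X (X - t *\<^sub>R Psi X) = t *\<^sub>R br (Psi X) X"
proof -
  note bl = compact_lie_algebra_bilinear[OF cla]
  note lin = bilinear_lsub[OF bl] bilinear_rsub[OF bl] bilinear_lmul[OF bl] bilinear_rmul[OF bl]
    bilinear_ladd[OF bl] bilinear_radd[OF bl] compact_lie_algebra_bracket_self[OF cla]
  show "br (X - t *\<^sub>R Psi X) (Y - t *\<^sub>R Psi Y)
      = br X Y - t *\<^sub>R (br (Psi X) Y + br X (Psi Y)) + t\<^sup>2 *\<^sub>R br (Psi X) (Psi Y)"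
    by (simp add: lin algebra_simps power2_eq_square)
  show "br X (Y - t *\<^sub>R Psi Y) - br (X - t *\<^sub>R Psi X) Y = t *\<^sub>R (br (Psi X) Y + br (Psi Y) X)"
    using compact_lie_algebra_antisym[OF cla, of "Psi Y" X] by (simp add: lin algebra_simps)
  show "br X (Y - t *\<^sub>R Psi Y) + br (X - t *\<^sub>R Psi X) Y
      = 2 *\<^sub>R br X Y - t *\<^sub>R (br (Psi X) Y + br X (Psi Y))"
    by (simp add: lin algebra_simps scaleR_2)
  show "br (Y - t *\<^sub>R Psi Y) Y = - t *\<^sub>R br (Psi Y) Y"
    by (simp add: lin)
  show "br X (X - t *\<^sub>R Psi X) = t *\<^sub>R br (Psi X) X"
    using compact_lie_algebra_antisym[OF cla, of X "Psi X"] by (simp add: lin)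
qed

lemma id_minus_scaled_quadratic_split:
  fixes Psi :: "'a::real_vector \<Rightarrow> 'a" and L A B :: 'a and t :: real
  assumes lin: "linear Psi"
  defines "E \<equiv> L + t *\<^sub>R (Psi L - A)"
  shows "L - t *\<^sub>R A + t\<^sup>2 *\<^sub>R B = (E - t *\<^sub>R Psi E) + t\<^sup>2 *\<^sub>R (Psi (Psi L) - Psi A + B)"
  unfolding E_def
  by (simp add: linear_add[OF lin] linear_diff[OF lin] linear_cmul[OF lin]
      algebra_simps power2_eq_square)

lemma inner_inv_add_scaled:
  assumes "self_adjoint M" and "bij M"
  shows "inner (inv M (M E + s *\<^sub>R D)) (M E + s *\<^sub>R D)
    = inner E (M E + s *\<^sub>R D) + s * inner D E + s\<^sup>2 * inner (inv M D) D"
proof -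
  have lin: "linear (inv M)"
    using self_adjoint_inv[OF assms] by (rule self_adjoint_linear)
  have "inner (inv M D) (M E) = inner D E"
    using assms by (simp add: self_adjoint_inner bij_is_surj surj_f_inv_f flip: self_adjoint_inner)
  then show ?thesis
    using assms(2)
    by (simp add: linear_add[OF lin] linear_cmul[OF lin] bij_is_inj inner_add_left inner_add_right
        inner_commute[of E D] power2_eq_square algebra_simps)
qed

lemma inverse_linear_path_polynomial:
  fixes Psi :: "'a::euclidean_space \<Rightarrow> 'a" and L A B C R P :: 'a and t :: real
  assumes sa: "self_adjoint Psi" and M_eq: "\<And>v. M v = v - t *\<^sub>R Psi v"
  defines "N \<equiv> L - t *\<^sub>R A + t\<^sup>2 *\<^sub>R B"
    and "E \<equiv> L + t *\<^sub>R (Psi L - A)"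
    and "D \<equiv> Psi (Psi L) - Psi A + B"
  shows "inner (M (- t *\<^sub>R P)) (t *\<^sub>R R) + 1/4 * inner (M (t *\<^sub>R C)) (t *\<^sub>R C)
      + 1/2 * inner N (2 *\<^sub>R L - t *\<^sub>R A) - 3/4 * (inner E N + t\<^sup>2 * inner D E)
    = 1/4 * inner L L + (- 3/4 * inner (Psi L) L) * t
      + (- 3/4 * inner (Psi L) (Psi L) + 3/2 * inner (Psi L) A - 1/2 * inner L B
         - 1/4 * inner A A + 1/4 * inner C C - inner R P) * t\<^sup>2
      + (- 3/4 * inner (Psi (Psi (Psi L))) L + 3/2 * inner (Psi (Psi L)) A
         - 3/2 * inner (Psi L) B - 3/4 * inner (Psi A) A - 1/4 * inner (Psi C) C
         + inner (Psi R) P + inner A B) * t ^ 3"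
proof -
  note lin = linear_add[OF self_adjoint_linear[OF sa]] linear_diff[OF self_adjoint_linear[OF sa]]
    linear_cmul[OF self_adjoint_linear[OF sa]] linear_neg[OF self_adjoint_linear[OF sa]]
  have sym: "inner A L = inner L A" "inner B L = inner L B" "inner B A = inner A B"
    "inner R P = inner P R" "inner (Psi R) P = inner (Psi P) R"
    "inner L (Psi L) = inner (Psi L) L" "inner A (Psi L) = inner (Psi L) A"
    "inner (Psi A) L = inner (Psi L) A" "inner L (Psi A) = inner (Psi L) A"
    "inner (Psi (Psi L)) L = inner (Psi L) (Psi L)" "inner L (Psi (Psi L)) = inner (Psi L) (Psi L)"
    "inner (Psi (Psi L)) (Psi L) = inner (Psi (Psi (Psi L))) L"
    "inner (Psi L) (Psi (Psi L)) = inner (Psi (Psi (Psi L))) L"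
    "inner (Psi A) (Psi L) = inner (Psi (Psi L)) A" "inner A (Psi (Psi L)) = inner (Psi (Psi L)) A"
    "inner B (Psi L) = inner (Psi L) B" "inner A (Psi A) = inner (Psi A) A"
    by (metis self_adjoint_inner[OF sa] inner_commute)+
  have EN: "inner E N = inner L L - 2 * t * inner L A + t\<^sup>2 * inner L B + t * inner (Psi L) L
      - t\<^sup>2 * inner (Psi L) A + t ^ 3 * inner (Psi L) B + t\<^sup>2 * inner A A - t ^ 3 * inner A B"
    unfolding E_def N_def
    by (simp add: inner_add_left inner_add_right sym algebra_simps power2_eq_square power3_eq_cube)
  have DE: "inner D E = inner (Psi L) (Psi L) + t * inner (Psi (Psi (Psi L))) L
      - 2 * t * inner (Psi (Psi L)) A - inner (Psi L) A + t * inner (Psi A) A + inner L B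
      + t * inner (Psi L) B - t * inner A B"
    unfolding E_def D_def by (simp add: inner_add_left inner_add_right lin sym algebra_simps)
  have NS: "inner N (2 *\<^sub>R L - t *\<^sub>R A) = 2 * inner L L - 3 * t * inner L A + t\<^sup>2 * inner A A
      + 2 * t\<^sup>2 * inner L B - t ^ 3 * inner A B"
    unfolding N_def
    by (simp add: inner_add_left inner_add_right sym algebra_simps power2_eq_square power3_eq_cube)
  have MP: "inner (M (- t *\<^sub>R P)) (t *\<^sub>R R) = - t\<^sup>2 * inner P R + t ^ 3 * inner (Psi P) R"
    unfolding M_eq by (simp add: lin algebra_simps power2_eq_square power3_eq_cube)
  have MC: "inner (M (t *\<^sub>R C)) (t *\<^sub>R C) = t\<^sup>2 * inner C C - t ^ 3 * inner (Psi C) C"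
    unfolding M_eq by (simp add: lin algebra_simps power2_eq_square power3_eq_cube)
  show ?thesis
    unfolding MP MC EN DE NS sym
    by (simp add: algebra_simps power2_eq_square power3_eq_cube)
qed

theorem mainTheorem2:
  fixes br :: "'a::euclidean_space \<Rightarrow> 'a \<Rightarrow> 'a"
    and Psi :: "'a \<Rightarrow> 'a" and X Y :: 'a and t :: real
  assumes "compact_lie_algebra br"
    and "self_adjoint Psi"
    and "t \<in> kappa_dom Psi"
  shows "let A = br (Psi X) Y + br X (Psi Y);
             B = br (Psi X) (Psi Y);
             C = br (Psi X) Y + br (Psi Y) X;
             D = Psi (Psi (br X Y)) - Psi A + B;
             \<alpha> = 1/4 * (norm (br X Y))\<^sup>2;
             \<beta> = - 3/4 * inner (Psi (br X Y)) (br X Y);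
             \<gamma> = - 3/4 * (norm (Psi (br X Y)))\<^sup>2 + 3/2 * inner (Psi (br X Y)) A
                 - 1/2 * inner (br X Y) B - 1/4 * (norm A)\<^sup>2 + 1/4 * (norm C)\<^sup>2
                 - inner (br (Psi X) X) (br (Psi Y) Y);
             \<delta> = - 3/4 * inner (Psi (Psi (Psi (br X Y)))) (br X Y)
                 + 3/2 * inner (Psi (Psi (br X Y))) A - 3/2 * inner (Psi (br X Y)) B
                 - 3/4 * inner (Psi A) A - 1/4 * inner (Psi C) C
                 + inner (Psi (br (Psi X) X)) (br (Psi Y) Y) + inner A B
         in kappa br Psi X Y t = \<alpha> + \<beta> * t + \<gamma> * t\<^sup>2 + \<delta> * t ^ 3
              - 3/4 * t ^ 4 * inner (inv_lin_path Psi t D) D"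
proof -
  have sa: "self_adjoint Psi" and lin: "linear Psi"
    using assms(2) self_adjoint_linear by blast+
  define M where "M = (\<lambda>v. v - t *\<^sub>R Psi v)"
  have saM: "self_adjoint M" and bijM: "bij M"
    unfolding M_def using self_adjoint_id_minus_scaled[OF sa] bij_id_minus_scaled[OF lin assms(3)] .
  define L A B C R P where "L = br X Y" and "A = br (Psi X) Y + br X (Psi Y)"
    and "B = br (Psi X) (Psi Y)" and "C = br (Psi X) Y + br (Psi Y) X"
    and "R = br (Psi X) X" and "P = br (Psi Y) Y"
  define N E D where "N = L - t *\<^sub>R A + t\<^sup>2 *\<^sub>R B" and "E = L + t *\<^sub>R (Psi L - A)"
    and "D = Psi (Psi L) - Psi A + B"
  have N_split: "N = M E + t\<^sup>2 *\<^sub>R D"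
    unfolding M_def N_def E_def D_def by (rule id_minus_scaled_quadratic_split[OF lin])
  have "kappa br Psi X Y t = sec_curv br (inv M) (M X) (M Y)"
    unfolding M_def by (rule kappa_eq_sec_curv[OF lin assms(3)])
  also have "\<dots> = inner (M (- t *\<^sub>R P)) (t *\<^sub>R R) + 1/4 * inner (M (t *\<^sub>R C)) (t *\<^sub>R C)
      + 1/2 * inner N (2 *\<^sub>R L - t *\<^sub>R A) - 3/4 * inner (inv M N) N"
    unfolding sec_curv_inverse_metric[OF assms(1) saM bijM]
    by (simp add: M_def bracket_id_minus_scaled[OF assms(1)]
        L_def A_def B_def C_def R_def P_def N_def)
  also have "inner (inv M N) N = inner E N + t\<^sup>2 * inner D E + t ^ 4 * inner (inv M D) D"
    using inner_inv_add_scaled[OF saM bijM, of E "t\<^sup>2" D] by (simp add: N_split flip: power_mult)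
  finally show ?thesis
    using inverse_linear_path_polynomial[OF sa, of M t P R C L A B, OF fun_cong[OF M_def],
        folded N_def E_def D_def]
    unfolding Let_def power2_norm_eq_inner inv_lin_path_def M_def[symmetric]
      L_def[symmetric] A_def[symmetric] B_def[symmetric] C_def[symmetric] R_def[symmetric]
      P_def[symmetric] D_def[symmetric]
    by (simp add: algebra_simps)
qed

end
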